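(* Let $\mathcal{F}$ be a hypergraph and $\mathcal{M}$ a matching of $\mathcal{F}$. Then $\mathcal{M}$ is a maximum matching if and only if there is no $\mathcal{M}$-augmenting set in $\mathcal{F}$.
   Context: A hypergraph (set system) $\mathcal{F}$ is a finite collection of distinct subsets of a vertex set (no uniformity is assumed). A matching is a collection of pairwise disjoint members of $\mathcal{F}$; it is maximum if no matching of $\mathcal{F}$ has more members. For $\mathcal{C}\subseteq\mathcal{F}$, write $X_{\mathcal{C}}=\bigcup_{A\in\mathcal{C}}A$ and $\mathcal{C}_x=\{A\in\mathcal{C}:x\in A\}$. Given a matching $\mathcal{M}$, a subfamily $\mathcal{C}\subseteq\mathcal{F}$ is an $\mathcal{M}$-augmenting set if: (1) $|\mathcal{M}\cap\mathcal{C}|<|\mathcal{C}\setminus\mathcal{M}|$; (2) whenever $B\in\mathcal{M}$ and $B\cap A\neq\emptyset$ for some $A\in\mathcal{C}$, then $B\in\mathcal{C}$; (3) $|\mathcal{C}_x\setminus\mathcal{M}|\leq 1$ for every $x\in X_{\mathcal{C}}$ (i.e., the members of $\mathcal{C}\setminus\mathcal{M}$ are pairwise disjoint). *)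

theory Defs
  imports Main
begin

text \<open>A hypergraph is a finite family F of distinct subsets of a vertex type 'a.\<close>

definition is_matching :: "'a set set \<Rightarrow> 'a set set \<Rightarrow> bool" where
  "is_matching F M \<longleftrightarrow> M \<subseteq> F \<and> (\<forall>A\<in>M. \<forall>B\<in>M. A \<noteq> B \<longrightarrow> A \<inter> B = {})"

definition is_maximum_matching :: "'a set set \<Rightarrow> 'a set set \<Rightarrow> bool" where
  "is_maximum_matching F M \<longleftrightarrow> is_matching F M \<and>
     (\<forall>N. is_matching F N \<longrightarrow> card N \<le> card M)"

definition sub_at :: "'a set set \<Rightarrow> 'a \<Rightarrow> 'a set set" where
  "sub_at C x = {A \<in> C. x \<in> A}"

definition is_augmenting_set :: "'a set set \<Rightarrow> 'a set set \<Rightarrow> 'a set set \<Rightarrow> bool" where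
  "is_augmenting_set F M C \<longleftrightarrow> C \<subseteq> F \<and>
     card (M \<inter> C) < card (C - M) \<and>
     (\<forall>B\<in>M. (\<exists>A\<in>C. B \<inter> A \<noteq> {}) \<longrightarrow> B \<in> C) \<and>
     (\<forall>x\<in>\<Union>C. card (sub_at C x - M) \<le> 1)"

end

theory Submission
  imports Defs
begin

text \<open>Both directions exchange along a symmetric difference. For an \<open>M\<close>-augmenting set \<open>C\<close>,
  \<open>sym_diff M C\<close> is again a matching: condition (2) discards every member of \<open>M\<close> meeting
  \<open>C\<close>, and condition (3) makes the members of \<open>C - M\<close> pairwise disjoint; by condition (1)
  it is larger than \<open>M\<close>. Conversely, if \<open>N\<close> is a larger matching then \<open>sym_diff M N\<close> is
  \<open>M\<close>-augmenting.\<close>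

lemma is_matchingD:
  assumes "is_matching F M"
  shows "M \<subseteq> F" and "\<And>A B. A \<in> M \<Longrightarrow> B \<in> M \<Longrightarrow> A \<noteq> B \<Longrightarrow> A \<inter> B = {}"
  using assms unfolding is_matching_def by blast+

lemma is_augmenting_setD:
  assumes "is_augmenting_set F M C"
  shows "C \<subseteq> F" and "card (M \<inter> C) < card (C - M)"
    and "\<And>B A. B \<in> M \<Longrightarrow> A \<in> C \<Longrightarrow> B \<inter> A \<noteq> {} \<Longrightarrow> B \<in> C"
    and "\<And>x. x \<in> \<Union>C \<Longrightarrow> card (sub_at C x - M) \<le> 1"
  using assms unfolding is_augmenting_set_def by (simp_all, blast, fastforce)

lemma card_le_one_sub_at_iff:
  assumes "finite C"
  shows "card (sub_at C x - M) \<le> 1 \<longleftrightarrow>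
    (\<forall>A\<in>C - M. \<forall>B\<in>C - M. x \<in> A \<longrightarrow> x \<in> B \<longrightarrow> A = B)"
proof -
  have "finite (sub_at C x - M)" using assms by (simp add: sub_at_def)
  then show ?thesis
    using card_le_Suc0_iff_eq[of "sub_at C x - M"] by (auto simp: sub_at_def)
qed

lemma augmenting_set_new_members_disjoint:
  assumes C: "is_augmenting_set F M C" and "finite C"
    and A: "A \<in> C - M" and B: "B \<in> C - M" and "A \<noteq> B"
  shows "A \<inter> B = {}"
proof (rule ccontr)
  assume "A \<inter> B \<noteq> {}"
  then obtain x where x: "x \<in> A" "x \<in> B" by blast
  then have "card (sub_at C x - M) \<le> 1"
    using is_augmenting_setD(4)[OF C] A by blast
  then show False
    using card_le_one_sub_at_iff[OF \<open>finite C\<close>] A B x \<open>A \<noteq> B\<close> by blast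
qed

lemma is_matching_sym_diff_augmenting_set:
  assumes M: "is_matching F M" and C: "is_augmenting_set F M C" and "finite C"
  shows "is_matching F (sym_diff M C)"
  unfolding is_matching_def
proof (intro conjI ballI impI)
  show "sym_diff M C \<subseteq> F"
    using is_matchingD(1)[OF M] is_augmenting_setD(1)[OF C] by blast
next
  fix A B assume A: "A \<in> sym_diff M C" and B: "B \<in> sym_diff M C" and "A \<noteq> B"
  then consider "A \<in> M - C" "B \<in> M - C" | "A \<in> C - M" "B \<in> C - M"
    | "A \<in> M - C" "B \<in> C - M" | "A \<in> C - M" "B \<in> M - C"
    by blast
  then show "A \<inter> B = {}"
  proof cases
    case 1
    then show ?thesis using is_matchingD(2)[OF M] \<open>A \<noteq> B\<close> by blast
  next
    case 2
    then show ?thesis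
      using augmenting_set_new_members_disjoint[OF C \<open>finite C\<close>] \<open>A \<noteq> B\<close> by blast
  next
    case 3
    then show ?thesis using is_augmenting_setD(3)[OF C, of A B] by blast
  next
    case 4
    then show ?thesis using is_augmenting_setD(3)[OF C, of B A] by blast
  qed
qed

lemma card_less_sym_diff_augmenting_set:
  assumes "is_augmenting_set F M C" "finite M" "finite C"
  shows "card M < card (sym_diff M C)"
proof -
  have "card M = card (M - C) + card (M \<inter> C)"
    using \<open>finite M\<close> by (metis add.commute card_Int_Diff)
  also have "\<dots> < card (M - C) + card (C - M)"
    using is_augmenting_setD(2)[OF assms(1)] by simp
  also have "\<dots> = card (sym_diff M C)"
    using assms(2,3) by (intro card_Un_disjoint[symmetric]) auto
  finally show ?thesis .
qed

lemma is_augmenting_set_sym_diff_larger_matching: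
  assumes M: "is_matching F M" and N: "is_matching F N"
    and "finite M" "finite N" and less: "card M < card N"
  shows "is_augmenting_set F M (sym_diff M N)" (is "is_augmenting_set F M ?C")
  unfolding is_augmenting_set_def
proof (intro conjI ballI impI)
  show "?C \<subseteq> F"
    using is_matchingD(1)[OF M] is_matchingD(1)[OF N] by blast
next
  have "card M = card (M - N) + card (M \<inter> N)" "card N = card (N - M) + card (M \<inter> N)"
    using \<open>finite M\<close> \<open>finite N\<close> by (metis add.commute card_Int_Diff Int_commute)+
  moreover have "M \<inter> ?C = M - N" "?C - M = N - M" by auto
  ultimately show "card (M \<inter> ?C) < card (?C - M)"
    using less by simp
next
  fix B assume B: "B \<in> M" and "\<exists>A\<in>?C. B \<inter> A \<noteq> {}"
  then obtain A where A: "A \<in> ?C" "B \<inter> A \<noteq> {}" by blast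
  show "B \<in> ?C"
  proof (rule ccontr)
    assume "B \<notin> ?C"
    then have "B \<in> N" "A \<noteq> B" using A B by auto
    then show False
      using A is_matchingD(2)[OF M, of B A] is_matchingD(2)[OF N, of B A] B by blast
  qed
next
  fix x assume "x \<in> \<Union>?C"
  have "finite ?C" using \<open>finite M\<close> \<open>finite N\<close> by blast
  then show "card (sub_at ?C x - M) \<le> 1"
    unfolding card_le_one_sub_at_iff[OF \<open>finite ?C\<close>] using is_matchingD(2)[OF N] by blast
qed

theorem lemma1:
  fixes F M :: "'a set set"
  assumes "finite F"
    and "is_matching F M"
  shows "is_maximum_matching F M \<longleftrightarrow> \<not> (\<exists>C. is_augmenting_set F M C)"
proof
  assume max: "is_maximum_matching F M"
  show "\<not> (\<exists>C. is_augmenting_set F M C)"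
  proof
    assume "\<exists>C. is_augmenting_set F M C"
    then obtain C where C: "is_augmenting_set F M C" by blast
    have "finite M" "finite C"
      using assms is_matchingD(1) is_augmenting_setD(1)[OF C] finite_subset by blast+
    then have "is_matching F (sym_diff M C)" "card M < card (sym_diff M C)"
      using is_matching_sym_diff_augmenting_set[OF assms(2) C] card_less_sym_diff_augmenting_set[OF C] by blast+
    then show False
      using max by (auto simp: is_maximum_matching_def)
  qed
next
  assume no_aug: "\<not> (\<exists>C. is_augmenting_set F M C)"
  have "card N \<le> card M" if N: "is_matching F N" for N
  proof (rule ccontr)
    assume "\<not> card N \<le> card M"
    moreover have "finite M" "finite N"
      using assms is_matchingD(1) N finite_subset by blast+
    ultimately show False
      using no_aug is_augmenting_set_sym_diff_larger_matching[OF assms(2) N] by auto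
  qed
  then show "is_maximum_matching F M"
    using assms(2) by (simp add: is_maximum_matching_def)
qed
end
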